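(* Let $p,q\ge 2$ be relatively prime integers, and for relatively prime positive integers $a,b$ with $b\ge2$ put $$T(a,b)=\sum_{n=1}^{b-1}\frac{\cot(\pi na/b)\cot(\pi n/b)}{\sin^2(\pi n/b)}.$$ Then $$45p\,T(p,q)+45q\,T(q,p)=p^4+q^4-5p^2q^2+3.$$ *)

theory Defs
  imports Complex_Main
begin

definition T :: "int \<Rightarrow> int \<Rightarrow> real" where
  "T a b = (\<Sum>n\<in>{1..b-1}.
      cot (pi * of_int n * of_int a / of_int b) * cot (pi * of_int n / of_int b)
      / (sin (pi * of_int n / of_int b))^2)"

end

theory Submission
  imports Defs "HOL-Complex_Analysis.Complex_Analysis"
begin

text \<open>
  The rational function
    G(z) = (z^p + 1)(z^q + 1)(z + 1) / ((z^p - 1)(z^q - 1)(z - 1)^3)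
  decays like |z|^-2, so the sum of its residues vanishes. At a q-th root of unity
  \<beta> = e^{2\<pi>ik/q} \<noteq> 1 the pole is simple, and since cot(\<pi>k/q) = i(\<beta>+1)/(\<beta>-1),
  cot(\<pi>kp/q) = i(\<beta>^p+1)/(\<beta>^p-1) and sin^2(\<pi>k/q) = -(\<beta>-1)^2/(4\<beta>), its residue there is
  the k-th term of T(p,q) divided by 2q; symmetrically at the p-th roots of unity.
  By coprimality z = 1 is the only common pole, and expanding G in powers of z - 1
  gives the residue -(p^4 + q^4 - 5p^2q^2 + 3)/(90pq) there.
\<close>

lemma cis_double_add_1: "cis (2 * t) + 1 = 2 * complex_of_real (cos t) * cis t"
  and cis_double_diff_1: "cis (2 * t) - 1 = 2 * \<i> * complex_of_real (sin t) * cis t"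
  using sin_cos_squared_add[of t]
  by (simp_all add: complex_eq_iff cos_double sin_double power2_eq_square)

lemma cot_eq_cis: "complex_of_real (cot t) = \<i> * (cis (2 * t) + 1) / (cis (2 * t) - 1)"
proof -
  have "\<i> * (cis (2 * t) + 1) / (cis (2 * t) - 1)
        = (2 * \<i> * cis t) * cos t / ((2 * \<i> * cis t) * sin t)"
    unfolding cis_double_add_1 cis_double_diff_1 by (simp add: mult_ac)
  also have "\<dots> = complex_of_real (cos t) / complex_of_real (sin t)"
    by (rule mult_divide_mult_cancel_left) simp
  finally show ?thesis by (simp add: cot_def)
qed

lemma sin_squared_eq_cis: "complex_of_real (sin t ^ 2) = - ((cis (2 * t) - 1)^2) / (4 * cis (2 * t))"
proof -
  have "cis (2 * t) = (cis t)^2" unfolding power2_eq_square cis_mult by (simp only: mult_2)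
  then have "- ((cis (2 * t) - 1)^2) / (4 * cis (2 * t)) = (4 * (cis t)^2) * sin t ^ 2 / (4 * (cis t)^2)"
    unfolding cis_double_diff_1 by (simp add: power_mult_distrib)
  then show ?thesis by simp
qed

lemma cot_mult_cot_div_sin_squared:
  fixes t :: real
  assumes \<beta>: "\<beta> = cis (2 * t)"
  shows "complex_of_real (cot (real p * t) * cot t / sin t ^ 2)
       = 4 * \<beta> * (\<beta>^p + 1) * (\<beta> + 1) / ((\<beta>^p - 1) * (\<beta> - 1)^3)"
proof -
  have \<beta>_pow: "cis (2 * (real p * t)) = \<beta>^p"
    unfolding \<beta> Complex.DeMoivre by (simp add: mult_ac)
  have "complex_of_real (cot (real p * t) * cot t / sin t ^ 2)
      = (\<i> * (\<beta>^p + 1) / (\<beta>^p - 1)) * (\<i> * (\<beta> + 1) / (\<beta> - 1)) / (- ((\<beta> - 1)^2) / (4 * \<beta>))"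
    unfolding of_real_mult of_real_divide cot_eq_cis sin_squared_eq_cis \<beta>_pow \<beta>[symmetric] ..
  also have "\<dots> = 4 * \<beta> * (\<beta>^p + 1) * (\<beta> + 1) / ((\<beta>^p - 1) * (\<beta> - 1)^3)"
  proof -
    have "\<beta> \<noteq> 0" by (simp add: \<beta>)
    have "(\<i> * (P + 1) / (P - 1)) * (\<i> * (\<beta> + 1) / (\<beta> - 1)) / (- ((\<beta> - 1)^2) / (4 * \<beta>))
        = 4 * \<beta> * (P + 1) * (\<beta> + 1) / ((P - 1) * (\<beta> - 1)^3)" for P
    proof (cases "P = 1 \<or> \<beta> = 1")
      case False
      with \<open>\<beta> \<noteq> 0\<close> show ?thesis
        by (simp add: divide_simps power2_eq_square power3_eq_cube)
    qed auto
    then show ?thesis .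
  qed
  finally show ?thesis .
qed

lemma sum_residues_eq_0_if_decay:
  fixes f :: "complex \<Rightarrow> complex"
  assumes fin: "finite S" and holo: "f holomorphic_on UNIV - S"
    and decay: "\<And>z. norm z \<ge> R0 \<Longrightarrow> norm (f z) \<le> C / norm z ^ 2"
  shows "(\<Sum>z\<in>S. residue f z) = 0"
proof -
  define \<Sigma> where "\<Sigma> = (\<Sum>z\<in>S. residue f z)"
  obtain B where B: "B > 0" "S \<subseteq> ball 0 B"
    using bounded_subset_ballD[OF finite_imp_bounded[OF fin]] by blast
  have bound: "norm \<Sigma> \<le> C / R" if R: "R \<ge> max R0 B" for R
  proof -
    have R_pos: "R > 0" using R B by linarith
    have img: "path_image (circlepath 0 R) \<subseteq> UNIV - S"
      using B R by (auto simp: path_image_circlepath)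
    have "contour_integral (circlepath 0 R) f
          = 2 * pi * \<i> * (\<Sum>z\<in>S. winding_number (circlepath 0 R) z * residue f z)"
      by (rule Residue_theorem[OF _ _ fin holo]) (use img R_pos in auto)
    also have "(\<Sum>z\<in>S. winding_number (circlepath 0 R) z * residue f z) = \<Sigma>"
      unfolding \<Sigma>_def
      by (intro sum.cong refl) (use B R in \<open>auto simp: winding_number_circlepath\<close>)
    finally have "(f has_contour_integral 2 * pi * \<i> * \<Sigma>) (circlepath 0 R)"
      using holomorphic_on_subset[OF holo img]
      by (metis contour_integrable_holomorphic_simple has_contour_integral_integral
          holomorphic_on_imp_continuous_on contour_integrable_continuous_circlepath)
    moreover have "0 \<le> C / R^2"
      using order_trans[OF norm_ge_zero decay[of "complex_of_real R"]] R_pos R by simp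
    ultimately have "norm (2 * pi * \<i> * \<Sigma>) \<le> C / R^2 * (2 * pi * R)"
      by (intro has_contour_integral_bound_circlepath) (use R_pos R decay in auto)
    then show ?thesis
      using R_pos by (simp add: norm_mult power2_eq_square field_simps)
  qed
  have "((\<lambda>R. C / R) \<longlongrightarrow> 0) at_top"
    by (intro tendsto_divide_0[OF tendsto_const] filterlim_at_top_imp_at_infinity filterlim_ident)
  moreover have "eventually (\<lambda>R. norm \<Sigma> \<le> C / R) at_top"
    using bound eventually_at_top_linorder by blast
  ultimately have "norm \<Sigma> \<le> 0"
    by (intro tendsto_lowerbound) auto
  then show ?thesis by (simp add: \<Sigma>_def)
qed

lemma residue_simple_zero:
  assumes "open s" "z \<in> s" and f: "f holomorphic_on s" and g: "g holomorphic_on s"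
    and g_deriv: "(g has_field_derivative g') (at z)" and "g z = 0" "g' \<noteq> 0"
    and g_nz: "\<And>w. w \<in> s - {z} \<Longrightarrow> g w \<noteq> 0"
  shows "residue (\<lambda>w. f w / g w) z = f z / g'"
proof (rule residue_simple')
  show "(\<lambda>w. f w / g w) holomorphic_on s - {z}"
    using f g g_nz by (intro holomorphic_intros) (auto intro: holomorphic_on_subset)
  have "((\<lambda>w. g w / (w - z)) \<longlongrightarrow> g') (at z)"
    using g_deriv \<open>g z = 0\<close> by (simp add: has_field_derivative_iff)
  moreover have "isCont f z"
    using f \<open>open s\<close> \<open>z \<in> s\<close> by (meson holomorphic_on_imp_continuous_on continuous_on_eq_continuous_at)
  ultimately have "((\<lambda>w. f w / (g w / (w - z))) \<longlongrightarrow> f z / g') (at z)"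
    using \<open>g' \<noteq> 0\<close> by (intro tendsto_divide) (auto simp: isCont_def)
  then show "((\<lambda>w. f w / g w * (w - z)) \<longlongrightarrow> f z / g') (at z)"
    by (rule Lim_transform_eventually) (auto simp: eventually_at_filter)
qed (use assms in auto)

lemma power_eq_1_coprime:
  fixes z :: "'a :: monoid_mult"
  assumes "coprime p q" "p > 0" "z^p = 1" "z^q = 1"
  shows "z = 1"
proof -
  obtain x y where "p * x = q * y + 1"
    using bezout_nat[of p q] assms by auto
  then have "z = z ^ (p * x)"
    using assms by (simp add: power_add power_mult)
  also have "\<dots> = 1"
    using assms by (simp add: power_mult)
  finally show ?thesis .
qed

definition cayley_fps :: "complex \<Rightarrow> complex fps" where
  "cayley_fps a = fps_X * (fps_binomial a + 1) / (fps_binomial a - 1)"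

lemma subdegree_fps_binomial_minus_1:
  "a \<noteq> 0 \<Longrightarrow> subdegree (fps_binomial a - 1) = 1"
  by (rule subdegreeI) auto

lemma cayley_fps_mult:
  assumes "a \<noteq> 0"
  shows "cayley_fps a * (fps_binomial a - 1) = fps_X * (fps_binomial a + 1)"
proof -
  have "subdegree (fps_X * (fps_binomial a + 1)) = 1"
    by (rule subdegreeI) auto
  then show ?thesis
    unfolding cayley_fps_def
    by (intro fps_times_divide_eq) (use subdegree_fps_binomial_minus_1[OF assms] in auto)
qed

lemma gbinomial_2_to_5:
  fixes a :: "'a :: field_char_0"
  shows "a gchoose 2 = a * (a - 1) / 2" "a gchoose 3 = a * (a - 1) * (a - 2) / 6"
    "a gchoose 4 = a * (a - 1) * (a - 2) * (a - 3) / 24"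
    "a gchoose 5 = a * (a - 1) * (a - 2) * (a - 3) * (a - 4) / 120"
  by (simp_all add: gbinomial_Suc numeral_eq_Suc atLeast0_atMost_Suc fact_numeral field_simps)

lemma fps_mult_nth_2_to_5:
  "fps_nth (f * g) 2 = fps_nth f 0 * fps_nth g 2 + fps_nth f 1 * fps_nth g 1 + fps_nth f 2 * fps_nth g 0"
  "fps_nth (f * g) 3 = fps_nth f 0 * fps_nth g 3 + fps_nth f 1 * fps_nth g 2
     + fps_nth f 2 * fps_nth g 1 + fps_nth f 3 * fps_nth g 0"
  "fps_nth (f * g) 4 = fps_nth f 0 * fps_nth g 4 + fps_nth f 1 * fps_nth g 3
     + fps_nth f 2 * fps_nth g 2 + fps_nth f 3 * fps_nth g 1 + fps_nth f 4 * fps_nth g 0"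
  "fps_nth (f * g) 5 = fps_nth f 0 * fps_nth g 5 + fps_nth f 1 * fps_nth g 4
     + fps_nth f 2 * fps_nth g 3 + fps_nth f 3 * fps_nth g 2 + fps_nth f 4 * fps_nth g 1
     + fps_nth f 5 * fps_nth g 0"
  by (simp_all add: fps_mult_nth numeral_eq_Suc atLeast0_atMost_Suc add_ac)

lemma cayley_fps_nth:
  assumes a: "a \<noteq> 0"
  shows "fps_nth (cayley_fps a) 0 = 2 / a" "fps_nth (cayley_fps a) 1 = 1 / a"
    "fps_nth (cayley_fps a) 2 = (a^2 - 1) / (6 * a)"
    "fps_nth (cayley_fps a) 3 = (1 - a^2) / (12 * a)"
    "fps_nth (cayley_fps a) 4 = (20 * a^2 - a^4 - 19) / (360 * a)"
proof -
  define c where "c = fps_nth (cayley_fps a)"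
  have eq: "fps_nth (cayley_fps a * (fps_binomial a - 1)) n = fps_nth (fps_X * (fps_binomial a + 1)) n" for n
    by (simp only: cayley_fps_mult[OF a])
  have e1: "c 0 * a = 2"
    using eq[of 1] by (simp add: fps_mult_nth c_def)
  have e2: "c 0 * (a gchoose 2) + c 1 * a = a"
    using eq[of 2] by (simp add: fps_mult_nth_2_to_5 c_def)
  have e3: "c 0 * (a gchoose 3) + c 1 * (a gchoose 2) + c 2 * a = a gchoose 2"
    using eq[of 3] by (simp add: fps_mult_nth_2_to_5 c_def)
  have e4: "c 0 * (a gchoose 4) + c 1 * (a gchoose 3) + c 2 * (a gchoose 2) + c 3 * a = a gchoose 3"
    using eq[of 4] by (simp add: fps_mult_nth_2_to_5 c_def)
  have e5: "c 0 * (a gchoose 5) + c 1 * (a gchoose 4) + c 2 * (a gchoose 3) + c 3 * (a gchoose 2)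
      + c 4 * a = a gchoose 4"
    using eq[of 5] by (simp add: fps_mult_nth_2_to_5 c_def)
  show c0: "c 0 = 2 / a"
    using e1 a by (simp add: field_simps)
  show c1: "c 1 = 1 / a"
    using e2 a unfolding c0 gbinomial_2_to_5 by (simp add: field_simps)
  have "c 2 * a = (a^2 - 1) / 6"
    using e3 a unfolding c0 c1 gbinomial_2_to_5 by (simp add: field_simps) algebra
  then show c2: "c 2 = (a^2 - 1) / (6 * a)"
    using a by (simp add: field_simps)
  have "c 3 * a = (1 - a^2) / 12"
    using e4 a unfolding c0 c1 c2 gbinomial_2_to_5 by (simp add: field_simps) algebra
  then show c3: "c 3 = (1 - a^2) / (12 * a)"
    using a by (simp add: field_simps)
  have "c 4 * a = (20 * a^2 - a^4 - 19) / 360"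
    using e5 a unfolding c0 c1 c2 c3 gbinomial_2_to_5 by (simp add: field_simps) algebra
  then show "c 4 = (20 * a^2 - a^4 - 19) / (360 * a)"
    using a by (simp add: field_simps)
qed

definition cayley_fun :: "nat \<Rightarrow> complex \<Rightarrow> complex" where
  "cayley_fun m x = (if x = 0 then 2 / of_nat m else x * ((1 + x)^m + 1) / ((1 + x)^m - 1))"

lemma has_fps_expansion_cayley_fun:
  assumes "m > 0"
  shows "cayley_fun m has_fps_expansion cayley_fps (of_nat m)"
proof -
  define B :: "complex fps" where "B = fps_binomial (of_nat m)"
  have sub_den: "subdegree (B - 1) = 1"
    unfolding B_def by (rule subdegree_fps_binomial_minus_1) (use assms in auto)
  have sub_num: "subdegree (fps_X * (B + 1)) = 1"
    by (rule subdegreeI) (auto simp: B_def)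
  have "(\<lambda>x. (1 + x) ^ m) has_fps_expansion B"
    unfolding B_def fps_binomial_of_nat by (intro fps_expansion_intros)
  then have "(\<lambda>x. if x = 0 then 2 / of_nat m else x * ((1 + x)^m + 1) / ((1 + x)^m - 1))
      has_fps_expansion fps_X * (B + 1) / (B - 1)"
    by (intro has_fps_expansion_divide)
       (use sub_den sub_num assms in \<open>auto intro!: fps_expansion_intros simp: B_def\<close>)
  then show ?thesis
    unfolding cayley_fun_def[abs_def] cayley_fps_def B_def .
qed

definition cot_kernel :: "nat \<Rightarrow> nat \<Rightarrow> complex \<Rightarrow> complex" where
  "cot_kernel p q z = ((z^p + 1) * (z^q + 1) * (z + 1)) / ((z^p - 1) * (z^q - 1) * (z - 1)^3)"

lemma cot_kernel_commute: "cot_kernel p q = cot_kernel q p"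
  unfolding cot_kernel_def by (auto simp: mult_ac)

lemma cot_kernel_shift:
  assumes "x \<noteq> 0"
  shows "cot_kernel p q (1 + x) = cayley_fun p x * cayley_fun q x * (2 + x) / x ^ Suc 4"
proof (cases "(1 + x)^p = 1 \<or> (1 + x)^q = 1")
  case True
  then show ?thesis by (auto simp: cot_kernel_def cayley_fun_def)
next
  case False
  then have "(1 + x)^p - 1 \<noteq> 0" "(1 + x)^q - 1 \<noteq> 0" by auto
  with assms show ?thesis
    unfolding cot_kernel_def cayley_fun_def
    by (simp add: frac_eq_eq power_Suc power3_eq_cube add.assoc) algebra
qed

lemma residue_cot_kernel_1:
  assumes "p > 0" "q > 0"
  shows "residue (cot_kernel p q) 1
       = - (of_nat p^4 + of_nat q^4 - 5 * of_nat p^2 * of_nat q^2 + 3) / (90 * of_nat p * of_nat q)"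
proof -
  have "residue (cot_kernel p q) 1 = residue (\<lambda>x. cot_kernel p q (1 + x)) 0"
    by (rule residue_shift_0)
  also have "\<dots> = residue (\<lambda>x. cayley_fun p x * cayley_fun q x * (2 + x) / x ^ Suc 4) 0"
    by (rule residue_cong) (auto simp: eventually_at_filter cot_kernel_shift)
  also have "\<dots> = fps_nth (cayley_fps (of_nat p) * cayley_fps (of_nat q) * (2 + fps_X)) 4"
    by (rule residue_fps_expansion_over_power_at_0)
       (use assms in \<open>intro fps_expansion_intros has_fps_expansion_cayley_fun\<close>)
  also have "\<dots> = - (of_nat p^4 + of_nat q^4 - 5 * of_nat p^2 * of_nat q^2 + 3) / (90 * of_nat p * of_nat q)"
  proof -
    have "(of_nat p :: complex) \<noteq> 0" "(of_nat q :: complex) \<noteq> 0"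
      using assms by auto
    then show ?thesis
      by (simp add: fps_mult_nth_2_to_5 cayley_fps_nth fps_numeral_nth divide_simps) algebra
  qed
  finally show ?thesis .
qed

lemma norm_cot_kernel_le:
  assumes "p \<ge> 1" "q \<ge> 1" "norm z \<ge> 2"
  shows "norm (cot_kernel p q z) \<le> 256 / norm z ^ 2"
proof -
  define R where "R = norm z"
  have "R \<ge> 2" using assms by (simp add: R_def)
  then have R: "R \<ge> 2" "R^p \<ge> 2" "R^q \<ge> 2"
    using assms order_trans[OF \<open>R \<ge> 2\<close> self_le_power[of R]] by auto
  have num: "norm (z^m + 1) \<le> 2 * R^m" if "R^m \<ge> 2" for m
    using norm_triangle_ineq[of "z^m" 1] that by (simp add: norm_power R_def)
  have den: "norm (z^m - 1) \<ge> R^m / 2" if "R^m \<ge> 2" for m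
    using norm_triangle_ineq2[of "z^m" 1] that by (simp add: norm_power R_def)
  have "norm (cot_kernel p q z) = norm (z^p + 1) * norm (z^q + 1) * norm (z^1 + 1) /
          (norm (z^p - 1) * norm (z^q - 1) * norm (z^1 - 1)^3)"
    unfolding cot_kernel_def by (simp add: norm_mult norm_divide norm_power)
  also have "\<dots> \<le> (2 * R^p) * (2 * R^q) * (2 * R^1) / ((R^p / 2) * (R^q / 2) * (R^1 / 2)^3)"
  proof (rule frac_le)
    show "norm (z^p + 1) * norm (z^q + 1) * norm (z^1 + 1) \<le> (2 * R^p) * (2 * R^q) * (2 * R^1)"
      using num[of p] num[of q] num[of 1] R by (intro mult_mono) auto
    show "(R^p / 2) * (R^q / 2) * (R^1 / 2)^3 \<le> norm (z^p - 1) * norm (z^q - 1) * norm (z^1 - 1)^3"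
      using den[of p] den[of q] den[of 1] R by (intro mult_mono power_mono) auto
  qed (use R in auto)
  also have "\<dots> = 256 / R^2"
    using R by (simp add: field_simps power2_eq_square power3_eq_cube)
  finally show ?thesis by (simp add: R_def)
qed

lemma sum_residues_cot_kernel:
  assumes "p \<ge> 1" "q \<ge> 1"
  shows "(\<Sum>z\<in>{z. z^q = 1} \<union> {z. z^p = 1}. residue (cot_kernel p q) z) = 0"
proof (rule sum_residues_eq_0_if_decay)
  show "finite ({z. z^q = 1} \<union> {z::complex. z^p = 1})"
    using assms by (auto intro: finite_roots_unity)
  have den_nz: "(z^p - 1) * (z^q - 1) * (z - 1)^3 \<noteq> 0"
    if "(z::complex) \<in> UNIV - ({z. z^q = 1} \<union> {z. z^p = 1})" for z
    using that by auto
  show "cot_kernel p q holomorphic_on UNIV - ({z. z^q = 1} \<union> {z. z^p = 1})"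
    unfolding cot_kernel_def[abs_def] by (rule holomorphic_on_divide den_nz holomorphic_intros)+
qed (rule norm_cot_kernel_le[OF assms])

lemma residue_cot_kernel_root:
  fixes \<beta> :: complex
  assumes "p \<ge> 1" "q \<ge> 1" "\<beta>^q = 1" "\<beta> \<noteq> 1" "\<beta>^p \<noteq> 1"
  shows "residue (cot_kernel p q) \<beta>
       = 2 * \<beta> * (\<beta>^p + 1) * (\<beta> + 1) / (of_nat q * (\<beta>^p - 1) * (\<beta> - 1)^3)"
proof -
  define s where "s = UNIV - ({z::complex. z^q = 1} \<union> {z. z^p = 1} - {\<beta>})"
  define g' where "g' = (\<beta>^p - 1) * (of_nat q * \<beta>^(q - 1)) * (\<beta> - 1)^3"
  have "\<beta> \<noteq> 0" using assms by (cases q) auto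
  have "\<beta>^(q - 1) * \<beta> = 1"
    using power_minus_mult[of q \<beta>] assms by simp
  then have \<beta>_pred: "\<beta>^(q - 1) = inverse \<beta>"
    by (intro inverse_unique[symmetric]) (simp add: mult.commute)
  have "residue (\<lambda>z. ((z^p + 1) * (z^q + 1) * (z + 1)) / ((z^p - 1) * (z^q - 1) * (z - 1)^3)) \<beta>
        = ((\<beta>^p + 1) * (\<beta>^q + 1) * (\<beta> + 1)) / g'"
  proof (rule residue_simple_zero)
    show "open s"
      using assms unfolding s_def by (intro open_Diff finite_imp_closed) (auto intro: finite_roots_unity)
    show "\<beta> \<in> s" by (simp add: s_def)
    show "(\<lambda>z. (z^p + 1) * (z^q + 1) * (z + 1)) holomorphic_on s"
      "(\<lambda>z. (z^p - 1) * (z^q - 1) * (z - 1)^3) holomorphic_on s"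
      by (intro holomorphic_intros)+
    show "((\<lambda>z. (z^p - 1) * (z^q - 1) * (z - 1)^3) has_field_derivative g') (at \<beta>)"
      unfolding g'_def by (auto intro!: derivative_eq_intros simp: assms)
    show "(\<beta>^p - 1) * (\<beta>^q - 1) * (\<beta> - 1)^3 = 0"
      using assms by simp
    show "g' \<noteq> 0"
      using assms \<open>\<beta> \<noteq> 0\<close> by (simp add: g'_def)
    show "(w^p - 1) * (w^q - 1) * (w - 1)^3 \<noteq> 0" if "w \<in> s - {\<beta>}" for w
      using that by (auto simp: s_def)
  qed
  moreover have "((\<beta>^p + 1) * (\<beta>^q + 1) * (\<beta> + 1)) / g'
      = 2 * \<beta> * (\<beta>^p + 1) * (\<beta> + 1) / (of_nat q * (\<beta>^p - 1) * (\<beta> - 1)^3)"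
    unfolding g'_def \<beta>_pred \<open>\<beta>^q = 1\<close> using assms \<open>\<beta> \<noteq> 0\<close>
    by (simp add: field_simps)
  ultimately show ?thesis
    unfolding cot_kernel_def[abs_def] by simp
qed

lemma residue_cot_kernel_cis:
  fixes k :: nat
  assumes "coprime p q" "p \<ge> 1" "q \<ge> 1" and nontrivial: "cis (2 * pi * k / q) \<noteq> 1"
  shows "residue (cot_kernel p q) (cis (2 * pi * k / q))
       = complex_of_real (cot (pi * k * p / q) * cot (pi * k / q) / sin (pi * k / q) ^ 2) / (2 * of_nat q)"
proof -
  define \<beta> where "\<beta> = cis (2 * pi * k / q)"
  have \<beta>: "\<beta> = cis (2 * (pi * k / q))"
    by (simp add: \<beta>_def mult.assoc)
  have "real q * (2 * (pi * k / q)) = 2 * pi * real k"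
    using assms by simp
  then have "\<beta>^q = 1"
    unfolding \<beta> Complex.DeMoivre by simp
  have "\<beta> \<noteq> 1"
    using nontrivial by (simp add: \<beta>_def)
  have "\<beta>^p \<noteq> 1"
    using power_eq_1_coprime[of q p \<beta>] assms \<open>\<beta>^q = 1\<close> \<open>\<beta> \<noteq> 1\<close> by (auto simp: coprime_commute)
  have "real p * (pi * k / q) = pi * k * p / q"
    by simp
  note cot_product = cot_mult_cot_div_sin_squared[OF \<beta>, of p, unfolded this]
  have "residue (cot_kernel p q) \<beta>
      = (4 * \<beta> * (\<beta>^p + 1) * (\<beta> + 1) / ((\<beta>^p - 1) * (\<beta> - 1)^3)) / (2 * of_nat q)"
    unfolding residue_cot_kernel_root[OF assms(2,3) \<open>\<beta>^q = 1\<close> \<open>\<beta> \<noteq> 1\<close> \<open>\<beta>^p \<noteq> 1\<close>]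
    by (simp add: divide_simps)
  then show ?thesis
    unfolding cot_product \<beta>_def .
qed

lemma T_of_nat:
  "T (int a) (int b)
     = (\<Sum>k=1..<b. cot (pi * real k * a / b) * cot (pi * real k / b) / sin (pi * real k / b) ^ 2)"
proof -
  have "{1..int b - 1} = int ` {1..<b}"
    by (auto simp: image_int_atLeastLessThan)
  then show ?thesis
    unfolding T_def by (simp add: sum.reindex)
qed

lemma sum_residues_cot_kernel_roots:
  assumes "coprime p q" "p \<ge> 1" "q \<ge> 1"
  shows "(\<Sum>z\<in>{z. z^q = 1}. residue (cot_kernel p q) z)
       = residue (cot_kernel p q) 1 + complex_of_real (T (int p) (int q)) / (2 * of_nat q)"
proof -
  define \<zeta> where "\<zeta> k = cis (2 * pi * real k / real q)" for k :: nat
  have bij: "bij_betw \<zeta> {..<q} {z. z^q = 1}"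
    unfolding \<zeta>_def by (rule Complex.bij_betw_roots_unity) (use assms in auto)
  have nontrivial: "\<zeta> k \<noteq> 1" if "k \<in> {1..<q}" for k
  proof
    assume "\<zeta> k = 1"
    then have "\<zeta> k = \<zeta> 0" by (simp add: \<zeta>_def)
    with that bij show False
      unfolding bij_betw_def inj_on_def by force
  qed
  have "(\<Sum>z\<in>{z. z^q = 1}. residue (cot_kernel p q) z) = (\<Sum>k<q. residue (cot_kernel p q) (\<zeta> k))"
    by (rule sum.reindex_bij_betw[OF bij, symmetric])
  also have "\<dots> = residue (cot_kernel p q) (\<zeta> 0) + (\<Sum>k=1..<q. residue (cot_kernel p q) (\<zeta> k))"
    using assms by (simp add: lessThan_atLeast0 sum.atLeast_Suc_lessThan)
  also have "(\<Sum>k=1..<q. residue (cot_kernel p q) (\<zeta> k))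
      = (\<Sum>k=1..<q. complex_of_real (cot (pi * k * p / q) * cot (pi * k / q) / sin (pi * k / q) ^ 2)
          / (2 * of_nat q))"
    using residue_cot_kernel_cis[OF assms] nontrivial by (simp add: \<zeta>_def)
  finally show ?thesis
    by (simp add: \<zeta>_def T_of_nat sum_divide_distrib)
qed

lemma sum_residues_cot_kernel_balance:
  assumes "coprime p q" "p \<ge> 1" "q \<ge> 1"
  shows "complex_of_real (T (int p) (int q)) / (2 * of_nat q)
       + complex_of_real (T (int q) (int p)) / (2 * of_nat p) = - residue (cot_kernel p q) 1"
proof -
  define r where "r = residue (cot_kernel p q)"
  define A B :: "complex set" where "A = {z. z^q = 1}" and "B = {z. z^p = 1}"
  have "finite A" "finite B"
    unfolding A_def B_def using assms by (auto intro: finite_roots_unity)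
  then have "sum r (A \<union> B) + sum r (A \<inter> B) = sum r A + sum r B"
    by (rule sum.union_inter)
  moreover have "A \<inter> B = {1}"
    unfolding A_def B_def using power_eq_1_coprime[OF assms(1)] assms by auto
  moreover have "sum r (A \<union> B) = 0"
    unfolding r_def A_def B_def by (rule sum_residues_cot_kernel) (use assms in auto)
  moreover have "sum r A = r 1 + complex_of_real (T (int p) (int q)) / (2 * of_nat q)"
    unfolding r_def A_def by (rule sum_residues_cot_kernel_roots) (use assms in auto)
  moreover have "sum r B = r 1 + complex_of_real (T (int q) (int p)) / (2 * of_nat p)"
    unfolding r_def B_def cot_kernel_commute[of p q]
    by (rule sum_residues_cot_kernel_roots) (use assms in \<open>auto simp: coprime_commute\<close>)
  ultimately show ?thesis
    unfolding r_def by (simp add: algebra_simps eq_neg_iff_add_eq_0)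
qed

lemma cot_sum_reciprocity_nat:
  assumes "coprime p q" "p \<ge> 2" "q \<ge> 2"
  shows "45 * real p * T (int p) (int q) + 45 * real q * T (int q) (int p)
       = real p^4 + real q^4 - 5 * real p^2 * real q^2 + 3"
proof -
  define X Y where "X = complex_of_real (T (int p) (int q))" and "Y = complex_of_real (T (int q) (int p))"
  have "X / (2 * of_nat q) + Y / (2 * of_nat p) = - residue (cot_kernel p q) 1"
    unfolding X_def Y_def by (rule sum_residues_cot_kernel_balance) (use assms in auto)
  also have "\<dots> = (of_nat p^4 + of_nat q^4 - 5 * of_nat p^2 * of_nat q^2 + 3) / (90 * of_nat p * of_nat q)"
    by (subst residue_cot_kernel_1) (use assms in \<open>simp_all only: minus_divide_left minus_minus\<close>)
  finally have "(X / (2 * of_nat q) + Y / (2 * of_nat p)) * (90 * of_nat p * of_nat q)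
      = of_nat p^4 + of_nat q^4 - 5 * of_nat p^2 * of_nat q^2 + 3"
    using assms by simp
  moreover have "(X / (2 * of_nat q) + Y / (2 * of_nat p)) * (90 * of_nat p * of_nat q)
      = 45 * of_nat p * X + 45 * of_nat q * Y"
    using assms by (simp add: field_simps)
  ultimately have "complex_of_real (45 * real p * T (int p) (int q) + 45 * real q * T (int q) (int p))
      = complex_of_real (real p^4 + real q^4 - 5 * real p^2 * real q^2 + 3)"
    unfolding X_def Y_def by simp
  then show ?thesis
    by (simp only: of_real_eq_iff)
qed

theorem mainTheorem16:
  fixes p q :: int
  assumes "p \<ge> 2" and "q \<ge> 2" and "coprime p q"
  shows "45 * of_int p * T p q + 45 * of_int q * T q p
         = of_int (p^4 + q^4 - 5 * p^2 * q^2 + 3)"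
proof -
  obtain P Q :: nat where P: "p = int P" and Q: "q = int Q"
    using assms(1,2) by (metis nonneg_int_cases order_trans zero_le_numeral)
  have "coprime P Q" "P \<ge> 2" "Q \<ge> 2"
    using assms unfolding P Q by auto
  then have "45 * real P * T (int P) (int Q) + 45 * real Q * T (int Q) (int P)
      = real P^4 + real Q^4 - 5 * real P^2 * real Q^2 + 3"
    by (rule cot_sum_reciprocity_nat)
  then show ?thesis
    unfolding P Q by simp
qed

end
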